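(* Let $A\in\mathbb{C}^{n\times n}$, let $\|\cdot\|$ be an arbitrary vector norm on $\mathbb{C}^n$ (with induced matrix norm also denoted $\|\cdot\|$), let $y_0\in\mathbb{C}^n\setminus\{0\}$ and let $\hat z_0\in\mathbb{C}^n$ with $\|\hat z_0\|=1$. Assume that both $y_0$ and $\hat z_0$ satisfy the RLGE condition. Then, as $t\to+\infty$, $$K(t,y_0,\hat z_0)\sim \frac{\|Q_1(t)\hat z_0\|}{\|Q_1(t)\hat y_0\|}\qquad\text{and}\qquad K(t,y_0)\sim \frac{\|Q_1(t)\|}{\|Q_1(t)\hat y_0\|}.$$
   Context: Notation: $\hat y_0=y_0/\|y_0\|$. For $t\in\mathbb{R}$ and unit $\hat z_0$, the directional condition number is $K(t,y_0,\hat z_0)=\|e^{tA}\hat z_0\|/\|e^{tA}\hat y_0\|$ and the condition number is $K(t,y_0)=\max_{\|\hat z_0\|=1}K(t,y_0,\hat z_0)=\|e^{tA}\|/\|e^{tA}\hat y_0\|$. Let $\lambda_1,\dots,\lambda_p$ be the distinct eigenvalues of $A$, $\omega_i=\operatorname{Im}\lambda_i$. Fix a Jordan basis $v^{(i,j,k)}$, $i\in\{1,\dots,p\}$, $j\in\{1,\dots,d_i\}$ ($d_i$ the geometric multiplicity of $\lambda_i$), $k\in\{1,\dots,m_{ij}\}$, consisting of Jordan chains: $(A-\lambda_iI)v^{(i,j,1)}=0$ and $(A-\lambda_iI)v^{(i,j,k)}=v^{(i,j,k-1)}$ for $k\ge 2$. Let $V$ be the matrix whose columns are the $v^{(i,j,k)}$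 ordered lexicographically in $(i,j,k)$, and let $w^{(i,j,k)}$ be the rows of $V^{-1}$ in the same order. For $u\in\mathbb{C}^n$, $\alpha_{ijk}(u)=w^{(i,j,k)}u$ is the component of $u$ along $v^{(i,j,k)}$. $\Lambda_1$ denotes the set of eigenvalues of $A$ with maximal real part, and $M_1=\max_{\lambda_i\in\Lambda_1}\max_{j}m_{ij}$. Define $$Q_1(t)=\sum_{\lambda_i\in\Lambda_1,\ j\in\{1,\dots,d_i\},\ m_{ij}=M_1} e^{\sqrt{-1}\,\omega_i t}\,v^{(i,j,1)}w^{(i,j,M_1)}\in\mathbb{C}^{n\times n}.$$ A vector $u\in\mathbb{C}^n$ satisfies the Rightmost Last Generalized Eigenvectors (RLGE) condition if $\alpha_{ijM_1}(u)\neq 0$ for some $(i,j)$ with $\lambda_i\in\Lambda_1$ and $m_{ij}=M_1$. Asymptotic equivalence: $a(t)\sim b(t)$ as $t\to+\infty$ means $\lim_{t\to+\infty}a(t)/b(t)=1$. *)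

theory Defs
  imports "HOL-Analysis.Analysis"
begin

definition is_vec_norm :: "(complex ^ 'n \<Rightarrow> real) \<Rightarrow> bool" where
  "is_vec_norm N \<longleftrightarrow>
     (\<forall>x. 0 \<le> N x) \<and> (\<forall>x. N x = 0 \<longleftrightarrow> x = 0) \<and>
     (\<forall>c x. N (c *s x) = cmod c * N x) \<and> (\<forall>x y. N (x + y) \<le> N x + N y)"

definition induced_norm :: "(complex ^ 'n \<Rightarrow> real) \<Rightarrow> (complex ^ 'n \<Rightarrow> complex ^ 'n) \<Rightarrow> real" where
  "induced_norm N f = (SUP x\<in>{x. N x = 1}. N (f x))"

definition expmv :: "real \<Rightarrow> complex ^ 'n ^ 'n \<Rightarrow> complex ^ 'n \<Rightarrow> complex ^ 'n" where
  "expmv t A x = (\<Sum>k. complex_of_real (t ^ k / fact k) *s (((\<lambda>u. A *v u) ^^ k) x))"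

definition normalize_vec :: "(complex ^ 'n \<Rightarrow> real) \<Rightarrow> complex ^ 'n \<Rightarrow> complex ^ 'n" where
  "normalize_vec N y = complex_of_real (1 / N y) *s y"

definition Kdir :: "(complex ^ 'n \<Rightarrow> real) \<Rightarrow> complex ^ 'n ^ 'n \<Rightarrow> real \<Rightarrow> complex ^ 'n \<Rightarrow> complex ^ 'n \<Rightarrow> real" where
  "Kdir N A t y0 z0 = N (expmv t A z0) / N (expmv t A (normalize_vec N y0))"

definition Kcond :: "(complex ^ 'n \<Rightarrow> real) \<Rightarrow> complex ^ 'n ^ 'n \<Rightarrow> real \<Rightarrow> complex ^ 'n \<Rightarrow> real" where
  "Kcond N A t y0 = (SUP z\<in>{z. N z = 1}. Kdir N A t y0 z)"

definition jidx :: "'c set \<Rightarrow> ('c \<Rightarrow> nat) \<Rightarrow> ('c \<times> nat) set" where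
  "jidx C m = {(c, k). c \<in> C \<and> 1 \<le> k \<and> k \<le> m c}"

definition is_jordan_basis ::
  "complex ^ 'n ^ 'n \<Rightarrow> 'c set \<Rightarrow> ('c \<Rightarrow> complex) \<Rightarrow> ('c \<Rightarrow> nat) \<Rightarrow> ('c \<times> nat \<Rightarrow> complex ^ 'n) \<Rightarrow> bool" where
  "is_jordan_basis A C lam m v \<longleftrightarrow>
     finite C \<and> (\<forall>c\<in>C. 1 \<le> m c) \<and>
     (\<forall>c\<in>C. A *v v (c, 1) - lam c *s v (c, 1) = 0) \<and>
     (\<forall>c\<in>C. \<forall>k. 2 \<le> k \<and> k \<le> m c \<longrightarrow> A *v v (c, k) - lam c *s v (c, k) = v (c, k - 1)) \<and>
     (\<forall>u. \<exists>!\<alpha>. (\<forall>p. p \<notin> jidx C m \<longrightarrow> \<alpha> p = 0) \<and> u = (\<Sum>p\<in>jidx C m. \<alpha> p *s v p))"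

definition jcoord :: "'c set \<Rightarrow> ('c \<Rightarrow> nat) \<Rightarrow> ('c \<times> nat \<Rightarrow> complex ^ 'n) \<Rightarrow> complex ^ 'n \<Rightarrow> 'c \<times> nat \<Rightarrow> complex" where
  "jcoord C m v u = (THE \<alpha>. (\<forall>p. p \<notin> jidx C m \<longrightarrow> \<alpha> p = 0) \<and> u = (\<Sum>p\<in>jidx C m. \<alpha> p *s v p))"

definition max_re :: "'c set \<Rightarrow> ('c \<Rightarrow> complex) \<Rightarrow> real" where
  "max_re C lam = Max ((\<lambda>c. Re (lam c)) ` C)"

definition M1 :: "'c set \<Rightarrow> ('c \<Rightarrow> complex) \<Rightarrow> ('c \<Rightarrow> nat) \<Rightarrow> nat" where
  "M1 C lam m = Max (m ` {c\<in>C. Re (lam c) = max_re C lam})"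

definition C1 :: "'c set \<Rightarrow> ('c \<Rightarrow> complex) \<Rightarrow> ('c \<Rightarrow> nat) \<Rightarrow> 'c set" where
  "C1 C lam m = {c\<in>C. Re (lam c) = max_re C lam \<and> m c = M1 C lam m}"

definition Q1 :: "'c set \<Rightarrow> ('c \<Rightarrow> complex) \<Rightarrow> ('c \<Rightarrow> nat) \<Rightarrow> ('c \<times> nat \<Rightarrow> complex ^ 'n) \<Rightarrow> real \<Rightarrow> complex ^ 'n \<Rightarrow> complex ^ 'n" where
  "Q1 C lam m v t u = (\<Sum>c\<in>C1 C lam m.
      (exp (\<i> * complex_of_real (Im (lam c) * t)) * jcoord C m v u (c, M1 C lam m)) *s v (c, 1))"

definition RLGE :: "'c set \<Rightarrow> ('c \<Rightarrow> complex) \<Rightarrow> ('c \<Rightarrow> nat) \<Rightarrow> ('c \<times> nat \<Rightarrow> complex ^ 'n) \<Rightarrow> complex ^ 'n \<Rightarrow> bool" where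
  "RLGE C lam m v u \<longleftrightarrow> (\<exists>c\<in>C1 C lam m. jcoord C m v u (c, M1 C lam m) \<noteq> 0)"

end

theory Submission
  imports Defs "HOL-Real_Asymp.Real_Asymp"
begin

(* Let mu be the maximal real part of the spectrum, M = M_1 and s(t) = e^(mu t) t^(M-1)/(M-1)!.
   On a Jordan chain e^(tA) v(c,k) = e^(t lambda_c) sum_(j<k) t^j/j! v(c,k-j); after division by s(t)
   every term tends to 0 except the top term v(c,1) of the longest chains with rightmost eigenvalue,
   which keeps the unimodular factor e^(i omega_c t). Hence e^(tA)/s(t) - Q_1(t) -> 0 in operator
   norm. For an RLGE vector u some coordinate of Q_1(t) u has constant nonzero modulus, so Q_1(t) u
   stays away from 0. Therefore ||e^(tA) z|| / (s(t) ||Q_1(t) z||) -> 1 uniformly on the unit sphere,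
   which passes to suprema and gives both asymptotics. *)

lemma norm_vector_smult: "norm ((c::'a::real_normed_div_algebra) *s (x::'a^'n)) = norm c * norm x"
  unfolding norm_vec_def by (simp add: norm_mult L2_set_right_distrib)

lemma scaleR_eq_vector_smult: "(r::real) *\<^sub>R (x::'a::real_algebra_1^'n) = of_real r *s x"
  unfolding vec_eq_iff vector_scaleR_component vector_smult_component
  by (simp only: scaleR_conv_of_real) simp

lemma bounded_linear_vector_smult_left: "bounded_linear (\<lambda>c::complex. c *s (w::complex^'n))"
  by (rule bounded_linear_intro[of _ "norm w"])
     (auto simp: vector_sadd_rdistrib norm_vector_smult scaleR_eq_vector_smult scaleR_conv_of_real)

lemma bounded_linear_vector_smult_right: "bounded_linear (\<lambda>x::complex^'n. c *s x)"
  by (rule bounded_linear_intro[of _ "cmod c"])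
     (auto simp: vector_add_ldistrib norm_vector_smult scaleR_eq_vector_smult mult.commute)

lemma tendsto_divide_1_if_close:
  fixes a b e :: "'a \<Rightarrow> real"
  assumes close: "\<forall>\<^sub>F t in F. \<bar>a t - b t\<bar> \<le> e t" and e: "(e \<longlongrightarrow> 0) F"
    and d: "0 < d" and bounded_below: "\<forall>\<^sub>F t in F. d \<le> b t"
  shows "((\<lambda>t. a t / b t) \<longlongrightarrow> 1) F"
proof -
  have "((\<lambda>t. (a t - b t) / b t) \<longlongrightarrow> 0) F"
  proof (rule Lim_null_comparison)
    show "\<forall>\<^sub>F t in F. norm ((a t - b t) / b t) \<le> e t / d"
      using close bounded_below
    proof eventually_elim
      case (elim t)
      then show ?case using d by (simp add: abs_divide frac_le)
    qed
    show "((\<lambda>t. e t / d) \<longlongrightarrow> 0) F" using tendsto_divide_zero[OF e] .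
  qed
  from tendsto_add[OF tendsto_const[of 1] this]
  have "((\<lambda>t. 1 + (a t - b t) / b t) \<longlongrightarrow> 1) F" by simp
  moreover have "\<forall>\<^sub>F t in F. 1 + (a t - b t) / b t = a t / b t"
    using bounded_below by eventually_elim (use d in \<open>simp add: field_simps\<close>)
  ultimately show ?thesis by (rule Lim_transform_eventually)
qed

lemma tendsto_divide_ratios_1:
  fixes a b c d :: "'a \<Rightarrow> real"
  assumes "((\<lambda>t. a t / b t) \<longlongrightarrow> 1) F" "((\<lambda>t. c t / d t) \<longlongrightarrow> 1) F"
    and "\<forall>\<^sub>F t in F. b t \<noteq> 0" "\<forall>\<^sub>F t in F. d t \<noteq> 0"
  shows "((\<lambda>t. (a t / c t) / (b t / d t)) \<longlongrightarrow> 1) F"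
proof -
  have "((\<lambda>t. (a t / b t) / (c t / d t)) \<longlongrightarrow> 1 / 1) F"
    by (intro tendsto_divide assms(1,2)) simp
  moreover have "\<forall>\<^sub>F t in F. (a t / b t) / (c t / d t) = (a t / c t) / (b t / d t)"
    using assms(3,4) by eventually_elim (simp add: field_simps)
  ultimately show ?thesis by (simp add: Lim_transform_eventually)
qed

lemma bdd_above_image_if_close:
  fixes f g :: "'a \<Rightarrow> real"
  assumes "bdd_above (g ` X)" and close: "\<And>x. x \<in> X \<Longrightarrow> \<bar>f x - g x\<bar> \<le> e"
  shows "bdd_above (f ` X)"
proof -
  obtain B where B: "\<And>x. x \<in> X \<Longrightarrow> g x \<le> B" using assms(1) by (auto simp: bdd_above_def)
  have "f x \<le> B + e" if "x \<in> X" for x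
    using B[OF that] close[OF that] unfolding abs_le_iff by linarith
  then show ?thesis by (rule bdd_aboveI2)
qed

lemma cSUP_abs_diff_le:
  fixes f g :: "'a \<Rightarrow> real"
  assumes X: "X \<noteq> {}" and bdd: "bdd_above (f ` X)" "bdd_above (g ` X)"
    and close: "\<And>x. x \<in> X \<Longrightarrow> \<bar>f x - g x\<bar> \<le> e"
  shows "\<bar>(SUP x\<in>X. f x) - (SUP x\<in>X. g x)\<bar> \<le> e"
proof -
  have "(SUP x\<in>X. f x) \<le> (SUP x\<in>X. g x) + e"
  proof (rule cSUP_least[OF X])
    fix x assume "x \<in> X"
    then show "f x \<le> (SUP x\<in>X. g x) + e"
      using cSUP_upper[OF \<open>x \<in> X\<close> bdd(2)] close[OF \<open>x \<in> X\<close>] unfolding abs_le_iff by linarith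
  qed
  moreover have "(SUP x\<in>X. g x) \<le> (SUP x\<in>X. f x) + e"
  proof (rule cSUP_least[OF X])
    fix x assume "x \<in> X"
    then show "g x \<le> (SUP x\<in>X. f x) + e"
      using cSUP_upper[OF \<open>x \<in> X\<close> bdd(1)] close[OF \<open>x \<in> X\<close>] unfolding abs_le_iff by linarith
  qed
  ultimately show ?thesis by linarith
qed

lemma cSUP_divide_const:
  fixes f :: "'a \<Rightarrow> real"
  assumes X: "X \<noteq> {}" and bdd: "bdd_above (f ` X)" and c: "0 \<le> c"
  shows "(SUP x\<in>X. f x / c) = (SUP x\<in>X. f x) / c"
proof (cases "c = 0")
  case False
  with c have c: "0 < c" by simp
  have "(SUP x\<in>X. f x / c) \<le> (SUP x\<in>X. f x) / c"
    using c by (intro cSUP_least[OF X] divide_right_mono cSUP_upper[OF _ bdd]) auto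
  moreover have "(SUP x\<in>X. f x) \<le> (SUP x\<in>X. f x / c) * c"
  proof (rule cSUP_least[OF X])
    fix x assume "x \<in> X"
    obtain B where "\<And>x. x \<in> X \<Longrightarrow> f x \<le> B" using bdd by (auto simp: bdd_above_def)
    then have "bdd_above ((\<lambda>x. f x / c) ` X)"
      using c by (intro bdd_aboveI2[of _ _ "B / c"] divide_right_mono) auto
    then have "f x / c \<le> (SUP x\<in>X. f x / c)" by (rule cSUP_upper[OF \<open>x \<in> X\<close>])
    then show "f x \<le> (SUP x\<in>X. f x / c) * c" using c by (simp add: divide_le_eq)
  qed
  ultimately have "(SUP x\<in>X. f x / c) * c = (SUP x\<in>X. f x)"
    using c by (auto simp: le_divide_eq intro: antisym)
  then show ?thesis using c by (simp add: eq_divide_eq)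
qed (simp add: X)

lemma SUP_ratio_tendsto_1:
  fixes f g :: "'b \<Rightarrow> 'a \<Rightarrow> real"
  assumes close: "\<And>t x. x \<in> S \<Longrightarrow> \<bar>f t x - g t x\<bar> \<le> e t" and e: "(e \<longlongrightarrow> 0) F"
    and bdd: "\<And>t. bdd_above (g t ` S)"
    and x0: "x0 \<in> S" and d: "0 < d" "\<And>t. d \<le> g t x0"
  shows "((\<lambda>t. (SUP x\<in>S. f t x) / (SUP x\<in>S. g t x)) \<longlongrightarrow> 1) F"
proof (rule tendsto_divide_1_if_close[OF _ e d(1)])
  have "S \<noteq> {}" using x0 by blast
  moreover have "bdd_above (f t ` S)" for t
    using bdd close by (rule bdd_above_image_if_close)
  ultimately have "\<bar>(SUP x\<in>S. f t x) - (SUP x\<in>S. g t x)\<bar> \<le> e t" for t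
    using bdd close by (rule cSUP_abs_diff_le)
  then show "\<forall>\<^sub>F t in F. \<bar>(SUP x\<in>S. f t x) - (SUP x\<in>S. g t x)\<bar> \<le> e t"
    by (simp add: always_eventually)
  show "\<forall>\<^sub>F t in F. d \<le> (SUP x\<in>S. g t x)"
    by (intro always_eventually allI order_trans[OF d(2) cSUP_upper[OF x0 bdd]])
qed

locale vec_norm =
  fixes N :: "complex ^ 'n \<Rightarrow> real"
  assumes is_vec_norm: "is_vec_norm N"
begin

lemma N_nonneg: "0 \<le> N x" and N_eq_0_iff: "N x = 0 \<longleftrightarrow> x = 0"
  and N_smult: "N (c *s x) = cmod c * N x" and N_triangle: "N (x + y) \<le> N x + N y"
  using is_vec_norm unfolding is_vec_norm_def by auto

lemma N_zero [simp]: "N 0 = 0"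
  using N_eq_0_iff by simp

lemma N_abs_diff_le: "\<bar>N x - N y\<bar> \<le> N (x - y)"
proof -
  have "N (y - x) = N (x - y)"
    using N_smult[of "-1" "x - y"] by (simp add: vector_sneg_minus1[symmetric])
  then show ?thesis using N_triangle[of "x - y" y] N_triangle[of "y - x" x] by simp
qed

lemma N_sum_le: "N (sum f S) \<le> (\<Sum>i\<in>S. N (f i))"
proof (induction S rule: infinite_finite_induct)
  case (insert x F)
  then show ?case using N_triangle[of "f x" "sum f F"] by simp
qed simp_all

lemma N_le_norm: obtains K where "0 \<le> K" "\<And>x. N x \<le> K * norm x"
proof
  show "0 \<le> (\<Sum>i\<in>UNIV. N (axis i 1))" by (simp add: sum_nonneg N_nonneg)
  fix x :: "complex^'n"
  have "N x = N (\<Sum>i\<in>UNIV. x$i *s axis i 1)" by (simp add: basis_expansion)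
  also have "\<dots> \<le> (\<Sum>i\<in>UNIV. N (x$i *s axis i 1))" by (rule N_sum_le)
  also have "\<dots> = (\<Sum>i\<in>UNIV. cmod (x$i) * N (axis i 1))" by (simp add: N_smult)
  also have "\<dots> \<le> (\<Sum>i\<in>UNIV. norm x * N (axis i 1))"
    by (intro sum_mono mult_right_mono Finite_Cartesian_Product.norm_nth_le N_nonneg)
  finally show "N x \<le> (\<Sum>i\<in>UNIV. N (axis i 1)) * norm x"
    by (simp add: sum_distrib_left mult.commute)
qed

lemma N_continuous_on: "continuous_on S N"
proof -
  obtain K where K: "0 \<le> K" "\<And>x. N x \<le> K * norm x" using N_le_norm by blast
  have "\<bar>N x - N y\<bar> \<le> K * dist x y" for x y
    using N_abs_diff_le[of x y] K(2)[of "x - y"] by (simp add: dist_norm)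
  then have "K-lipschitz_on S N"
    using K(1) by (intro lipschitz_onI) (auto simp: dist_real_def)
  then show ?thesis by (rule lipschitz_on_continuous_on)
qed

(* N attains a positive minimum on the compact Euclidean unit sphere. *)
lemma norm_le_N: obtains c where "0 < c" "\<And>x. norm x \<le> c * N x"
proof -
  have "axis undefined 1 \<in> sphere (0::complex^'n) 1" by (simp add: norm_axis_1)
  then obtain x0 where x0: "x0 \<in> sphere 0 1" "\<And>y. y \<in> sphere 0 1 \<Longrightarrow> N x0 \<le> N y"
    using continuous_attains_inf[OF compact_sphere _ N_continuous_on] by blast
  then have pos: "0 < N x0" using N_eq_0_iff[of x0] N_nonneg[of x0] by fastforce
  moreover have "norm x \<le> 1 / N x0 * N x" for x
  proof (cases "x = 0")
    case False
    have "N x0 \<le> N (complex_of_real (1 / norm x) *s x)"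
      using False by (intro x0(2)) (simp add: norm_vector_smult norm_divide)
    also have "\<dots> = N x / norm x" by (simp add: N_smult norm_divide)
    finally show ?thesis using False pos by (simp add: field_simps)
  qed simp
  ultimately show ?thesis using that[of "1 / N x0"] by simp
qed

end

lemma binomial_power_Suc:
  "of_nat (Suc n choose j) * (l::'a::comm_semiring_1) ^ (Suc n - j) =
     of_nat (n choose j) * l ^ (n - j) * l + (if 1 \<le> j then of_nat (n choose (j - 1)) * l ^ (n - (j - 1)) else 0)"
proof (cases j)
  case (Suc i)
  have "of_nat (n choose Suc i) * l ^ (n - Suc i) * l = of_nat (n choose Suc i) * l ^ (n - i)"
  proof (cases "Suc i \<le> n")
    case True
    then have "n - i = Suc (n - Suc i)" by simp
    then show ?thesis by (simp add: mult_ac)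
  next
    case False
    then have "n choose Suc i = 0" by simp
    then show ?thesis by (simp del: binomial_eq_0_iff)
  qed
  note top = this
  have "of_nat (Suc n choose j) * l ^ (Suc n - j)
      = of_nat (n choose i) * l ^ (n - i) + of_nat (n choose Suc i) * l ^ (n - i)"
    using Suc by (simp add: distrib_right)
  also have "\<dots> = of_nat (n choose j) * l ^ (n - j) * l + of_nat (n choose (j - 1)) * l ^ (n - (j - 1))"
    unfolding Suc diff_Suc_1 top by (rule add.commute)
  finally show ?thesis using Suc by simp
qed (simp add: mult.commute)

lemma sums_exp_binomial:
  fixes l :: "'a::{real_normed_field,banach}"
  shows "(\<lambda>n. of_real (t^n / fact n) * (of_nat (n choose j) * l ^ (n - j)))
     sums (exp (of_real t * l) * of_real (t^j / fact j))"
proof -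
  define f where "f n = of_real (t^n / fact n) * (of_nat (n choose j) * l ^ (n - j))" for n
  have shift: "f (n + j) = of_real (t^j / fact j) * ((of_real t * l)^n /\<^sub>R fact n)" for n
  proof -
    have "(of_nat ((n + j) choose j) :: 'a) = fact (n + j) / (fact j * fact n)"
      by (subst binomial_fact) auto
    then show ?thesis by (simp add: f_def power_add power_mult_distrib field_simps scaleR_conv_of_real)
  qed
  have "(\<lambda>n. f (n + j)) sums (of_real (t^j / fact j) * exp (of_real t * l))"
    unfolding shift by (intro sums_mult exp_converges)
  moreover have "sum f {..<j} = 0" by (intro sum.neutral) (simp add: f_def binomial_eq_0)
  ultimately have "f sums (of_real (t^j / fact j) * exp (of_real t * l))"
    by (simp add: sums_iff_shift)
  moreover have "f = (\<lambda>n. of_real (t^n / fact n) * (of_nat (n choose j) * l ^ (n - j)))"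
    by (simp add: fun_eq_iff f_def)
  ultimately show ?thesis by (simp add: mult.commute)
qed

lemma funpow_matrix_vector_sum:
  "((\<lambda>u. (A::'a::field^'n^'n) *v u) ^^ n) (\<Sum>p\<in>S. f p *s w p)
     = (\<Sum>p\<in>S. f p *s ((\<lambda>u. A *v u) ^^ n) (w p))"
  by (induction n) (simp_all add: vec.sum vec.scale)

locale jordan_basis =
  fixes A :: "complex^'n^'n" and C :: "'c set" and lam :: "'c \<Rightarrow> complex"
    and m :: "'c \<Rightarrow> nat" and v :: "'c \<times> nat \<Rightarrow> complex^'n"
  assumes is_jordan_basis: "is_jordan_basis A C lam m v"
begin

abbreviation "J \<equiv> jidx C m"
abbreviation "\<alpha> \<equiv> jcoord C m v"

lemma finite_C: "finite C" and m_ge_1: "c \<in> C \<Longrightarrow> 1 \<le> m c"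
  and chain_start: "c \<in> C \<Longrightarrow> A *v v (c, 1) = lam c *s v (c, 1)"
  and chain_step: "c \<in> C \<Longrightarrow> 2 \<le> k \<Longrightarrow> k \<le> m c \<Longrightarrow> A *v v (c, k) = lam c *s v (c, k) + v (c, k - 1)"
  and unique_expansion: "\<exists>!\<beta>. (\<forall>p. p \<notin> J \<longrightarrow> \<beta> p = 0) \<and> u = (\<Sum>p\<in>J. \<beta> p *s v p)"
  using is_jordan_basis unfolding is_jordan_basis_def by (auto simp: algebra_simps)

lemma jidx_eq_Sigma: "J = Sigma C (\<lambda>c. {1..m c})"
  by (auto simp: jidx_def)

lemma finite_jidx: "finite J"
  unfolding jidx_eq_Sigma using finite_C by auto

lemma jcoord_outside: "p \<notin> J \<Longrightarrow> \<alpha> u p = 0"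
  and jcoord_expansion: "u = (\<Sum>p\<in>J. \<alpha> u p *s v p)"
  using theI'[OF unique_expansion[of u]] unfolding jcoord_def by blast+

lemma jcoord_unique: "(\<And>p. p \<notin> J \<Longrightarrow> \<beta> p = 0) \<Longrightarrow> u = (\<Sum>p\<in>J. \<beta> p *s v p) \<Longrightarrow> \<alpha> u = \<beta>"
  unfolding jcoord_def by (rule the1_equality[OF unique_expansion]) auto

lemma jcoord_add: "\<alpha> (x + y) p = \<alpha> x p + \<alpha> y p"
proof -
  have "x + y = (\<Sum>p\<in>J. (\<alpha> x p + \<alpha> y p) *s v p)"
    by (subst jcoord_expansion[of x], subst jcoord_expansion[of y])
       (simp add: vector_sadd_rdistrib sum.distrib)
  then show ?thesis by (subst jcoord_unique[where \<beta> = "\<lambda>p. \<alpha> x p + \<alpha> y p"]) (simp_all add: jcoord_outside)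
qed

lemma jcoord_smult: "\<alpha> (c *s x) p = c * \<alpha> x p"
proof -
  have "c *s x = (\<Sum>p\<in>J. (c * \<alpha> x p) *s v p)"
    by (subst jcoord_expansion[of x]) (simp add: vec.scale_sum_right)
  then show ?thesis by (subst jcoord_unique[where \<beta> = "\<lambda>p. c * \<alpha> x p"]) (simp_all add: jcoord_outside)
qed

lemma jcoord_bounded: obtains B where "0 \<le> B" "\<And>x p. cmod (\<alpha> x p) \<le> B * norm x"
proof
  have linear: "bounded_linear (\<lambda>x. \<alpha> x p)" for p
    by (simp add: linear_conv_bounded_linear[symmetric] linear_iff jcoord_add
        scaleR_eq_vector_smult jcoord_smult scaleR_conv_of_real)
  have onorm_nonneg: "0 \<le> onorm (\<lambda>x. \<alpha> x p)" for p
    using onorm_pos_le[OF linear] .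
  show "0 \<le> (\<Sum>p\<in>J. onorm (\<lambda>x. \<alpha> x p))" by (simp add: sum_nonneg onorm_nonneg)
  fix x p
  show "cmod (\<alpha> x p) \<le> (\<Sum>p\<in>J. onorm (\<lambda>x. \<alpha> x p)) * norm x"
  proof (cases "p \<in> J")
    case True
    then have "onorm (\<lambda>x. \<alpha> x p) \<le> (\<Sum>p\<in>J. onorm (\<lambda>x. \<alpha> x p))"
      using onorm_nonneg by (intro member_le_sum finite_jidx)
    then have "onorm (\<lambda>x. \<alpha> x p) * norm x \<le> (\<Sum>p\<in>J. onorm (\<lambda>x. \<alpha> x p)) * norm x"
      by (rule mult_right_mono) simp
    with onorm[OF linear, of x p] show ?thesis by (rule order_trans)
  qed (simp add: jcoord_outside sum_nonneg onorm_nonneg)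
qed

lemma RLGE_smult: "RLGE C lam m v u \<Longrightarrow> c \<noteq> 0 \<Longrightarrow> RLGE C lam m v (c *s u)"
  unfolding RLGE_def by (auto simp: jcoord_smult)

lemma funpow_matrix_chain:
  assumes c: "c \<in> C"
  shows "1 \<le> k \<Longrightarrow> k \<le> m c \<Longrightarrow>
    ((\<lambda>u. A *v u) ^^ n) (v (c, k)) = (\<Sum>j<k. (of_nat (n choose j) * lam c ^ (n - j)) *s v (c, k - j))"
proof (induction n arbitrary: k)
  case 0
  have "(\<Sum>j<k. (of_nat (0 choose j) * lam c ^ (0 - j)) *s v (c, k - j))
      = (\<Sum>j<k. if j = 0 then v (c, k) else 0)"
    by (rule sum.cong) auto
  then show ?case using 0 by simp
next
  case (Suc n)
  define a where "a j = of_nat (n choose j) * lam c ^ (n - j)" for j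
  obtain k' where k': "k = Suc k'" using Suc.prems by (cases k) auto
  have A_chain: "A *v v (c, k - j) = lam c *s v (c, k - j) + (if j < k' then v (c, k - Suc j) else 0)"
    if "j < k" for j
  proof (cases "j < k'")
    case True
    then show ?thesis using chain_step[OF c, of "k - j"] Suc.prems k' by (simp add: diff_diff_add)
  next
    case False
    then have "k - j = 1" using that k' by simp
    then show ?thesis using chain_start[OF c] False by simp
  qed
  have "((\<lambda>u. A *v u) ^^ Suc n) (v (c, k)) = (\<Sum>j<k. a j *s (A *v v (c, k - j)))"
    using Suc.IH[OF Suc.prems] by (simp add: a_def vec.sum vec.scale)
  also have "\<dots> = (\<Sum>j<k. (a j * lam c) *s v (c, k - j))
      + (\<Sum>j<k. if j < k' then a j *s v (c, k - Suc j) else 0)"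
    unfolding sum.distrib[symmetric]
    by (rule sum.cong) (auto simp: A_chain vector_add_ldistrib vector_smult_assoc)
  also have "(\<Sum>j<k. if j < k' then a j *s v (c, k - Suc j) else 0) = (\<Sum>j<k'. a j *s v (c, k - Suc j))"
    unfolding k' sum.lessThan_Suc by (simp cong: sum.cong_simp)
  also have "(\<Sum>j<k'. a j *s v (c, k - Suc j)) = (\<Sum>j<k. (if 1 \<le> j then a (j - 1) else 0) *s v (c, k - j))"
    unfolding k' sum.lessThan_Suc_shift by simp
  also have "(\<Sum>j<k. (a j * lam c) *s v (c, k - j)) + \<dots>
     = (\<Sum>j<k. (of_nat (Suc n choose j) * lam c ^ (Suc n - j)) *s v (c, k - j))"
    unfolding sum.distrib[symmetric] a_def binomial_power_Suc vector_sadd_rdistrib ..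
  finally show ?case .
qed

definition chain_exp :: "'c \<times> nat \<Rightarrow> real \<Rightarrow> complex^'n" where
  "chain_exp p t = (\<Sum>j<snd p.
     (exp (complex_of_real t * lam (fst p)) * complex_of_real (t^j / fact j)) *s v (fst p, snd p - j))"

lemma sums_expmv_chain:
  assumes "p \<in> J"
  shows "(\<lambda>n. complex_of_real (t^n / fact n) *s ((\<lambda>u. A *v u) ^^ n) (v p)) sums chain_exp p t"
proof -
  obtain c k where p: "p = (c, k)" and c: "c \<in> C" and k: "1 \<le> k" "k \<le> m c"
    using assms by (auto simp: jidx_def)
  have "(\<lambda>n. complex_of_real (t^n / fact n) *s ((\<lambda>u. A *v u) ^^ n) (v p)) =
      (\<lambda>n. \<Sum>j<k. (complex_of_real (t^n / fact n) * (of_nat (n choose j) * lam c ^ (n - j))) *s v (c, k - j))"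
    by (simp add: p funpow_matrix_chain[OF c k] vec.scale_sum_right)
  also have "\<dots> sums chain_exp p t"
    unfolding p chain_exp_def fst_conv snd_conv
    by (intro sums_sum bounded_linear.sums[OF bounded_linear_vector_smult_left] sums_exp_binomial)
  finally show ?thesis .
qed

lemma expmv_jcoord_expansion: "expmv t A u = (\<Sum>p\<in>J. \<alpha> u p *s chain_exp p t)"
proof -
  have "(\<lambda>n. complex_of_real (t^n / fact n) *s ((\<lambda>u. A *v u) ^^ n) u) =
      (\<lambda>n. \<Sum>p\<in>J. \<alpha> u p *s (complex_of_real (t^n / fact n) *s ((\<lambda>u. A *v u) ^^ n) (v p)))"
    by (subst jcoord_expansion[of u])
       (simp add: funpow_matrix_vector_sum vec.scale_sum_right mult.commute)
  also have "\<dots> sums (\<Sum>p\<in>J. \<alpha> u p *s chain_exp p t)"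
    by (intro sums_sum bounded_linear.sums[OF bounded_linear_vector_smult_right] sums_expmv_chain)
  finally show ?thesis unfolding expmv_def by (rule sums_unique[symmetric])
qed

end

locale jordan_dominant = jordan_basis A C lam m v
  for A :: "complex^'n^'n" and C :: "'c set" and lam m v +
  assumes C1_nonempty: "C1 C lam m \<noteq> {}"
begin

abbreviation "\<mu> \<equiv> max_re C lam"
abbreviation "M \<equiv> M1 C lam m"
abbreviation "D \<equiv> C1 C lam m"
abbreviation "Q \<equiv> Q1 C lam m v"

lemma Re_lam_le: "c \<in> C \<Longrightarrow> Re (lam c) \<le> \<mu>"
  unfolding max_re_def using finite_C by (intro Max_ge) auto

lemma m_le_M1: "c \<in> C \<Longrightarrow> Re (lam c) = \<mu> \<Longrightarrow> m c \<le> M"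
  unfolding M1_def using finite_C by (intro Max_ge) auto

lemma mem_C1_iff: "c \<in> D \<longleftrightarrow> c \<in> C \<and> Re (lam c) = \<mu> \<and> m c = M"
  by (simp add: C1_def)

lemma M1_ge_1: "1 \<le> M"
  using C1_nonempty m_ge_1 mem_C1_iff by force

(* The top term e^(t lambda) t^(M-1)/(M-1)! of the longest chains with rightmost eigenvalue,
   stripped of its phase. *)
definition growth :: "real \<Rightarrow> real" where
  "growth t = exp (\<mu> * t) * t ^ (M - 1) / fact (M - 1)"

lemma growth_pos: "0 < t \<Longrightarrow> 0 < growth t"
  by (simp add: growth_def)

abbreviation scaled_expmv :: "real \<Rightarrow> complex^'n \<Rightarrow> complex^'n" where
  "scaled_expmv t u \<equiv> complex_of_real (1 / growth t) *s expmv t A u"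

definition phase :: "'c \<Rightarrow> real \<Rightarrow> complex" where
  "phase c t = exp (\<i> * complex_of_real (Im (lam c) * t))"

lemma norm_phase [simp]: "cmod (phase c t) = 1"
  by (simp add: phase_def norm_exp_i_times)

definition limit_weight :: "'c \<Rightarrow> nat \<Rightarrow> real" where
  "limit_weight c j = (if c \<in> D \<and> j = M - 1 then 1 else 0)"

definition relative_weight :: "'c \<Rightarrow> nat \<Rightarrow> real \<Rightarrow> real" where
  "relative_weight c j t = fact (M - 1) / fact j * (exp (t * Re (lam c)) / exp (\<mu> * t) * t ^ j / t ^ (M - 1))"

lemma scaled_coefficient_eq:
  assumes "0 < t"
  shows "complex_of_real (1 / growth t) * (exp (complex_of_real t * lam c) * complex_of_real (t^j / fact j))
     = complex_of_real (relative_weight c j t) * phase c t"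
proof -
  have "complex_of_real t * lam c = complex_of_real (t * Re (lam c)) + \<i> * complex_of_real (Im (lam c) * t)"
    by (simp add: complex_eq_iff)
  then have "exp (complex_of_real t * lam c) = complex_of_real (exp (t * Re (lam c))) * phase c t"
    by (simp only: phase_def exp_add exp_of_real)
  then have "complex_of_real (1 / growth t) * (exp (complex_of_real t * lam c) * complex_of_real (t^j / fact j))
      = complex_of_real (1 / growth t * exp (t * Re (lam c)) * (t^j / fact j)) * phase c t"
    by (simp add: mult_ac)
  also have "1 / growth t * exp (t * Re (lam c)) * (t^j / fact j) = relative_weight c j t"
    using assms by (simp add: growth_def relative_weight_def field_simps)
  finally show ?thesis .
qed

lemma relative_weight_tendsto:
  assumes c: "c \<in> C" and j: "j < m c"
  shows "(relative_weight c j \<longlongrightarrow> limit_weight c j) at_top"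
proof (cases "Re (lam c) < \<mu>")
  case True
  define a where "a = \<mu> - Re (lam c)"
  have "0 < a" using True by (simp add: a_def)
  then have decay: "((\<lambda>t. exp (- a * t) * t ^ j / t ^ d) \<longlongrightarrow> 0) at_top" for d
    by real_asymp
  have weight: "relative_weight c j = (\<lambda>t. fact (M - 1) / fact j * (exp (- a * t) * t ^ j / t ^ (M - 1)))"
    by (rule ext) (simp add: relative_weight_def a_def exp_diff[symmetric] algebra_simps)
  have not_top: "\<not> (c \<in> D \<and> j = M - 1)" using True mem_C1_iff by auto
  show ?thesis unfolding weight limit_weight_def if_not_P[OF not_top] by (rule tendsto_mult_right_zero[OF decay])
next
  case False
  then have Re: "Re (lam c) = \<mu>" using Re_lam_le[OF c] by simp
  have weight: "relative_weight c j = (\<lambda>t. fact (M - 1) / fact j * (t ^ j / t ^ (M - 1)))"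
    by (rule ext) (simp add: relative_weight_def Re mult.commute)
  have power_decay: "((\<lambda>t::real. t ^ j / t ^ d) \<longlongrightarrow> 0) at_top" if "j < d" for d
    using that by real_asymp
  show ?thesis
  proof (cases "j = M - 1")
    case True
    then have "c \<in> D" using j m_le_M1[OF c Re] mem_C1_iff c Re by auto
    have "\<forall>\<^sub>F t in at_top. relative_weight c j t = 1"
      using eventually_gt_at_top[of 0] unfolding weight by eventually_elim (simp add: True)
    then show ?thesis using True \<open>c \<in> D\<close> by (simp add: tendsto_eventually limit_weight_def)
  next
    case False
    then have "j < M - 1" using j m_le_M1[OF c Re] by linarith
    have not_top: "\<not> (c \<in> D \<and> j = M - 1)" using False by simp
    show ?thesis
      unfolding weight limit_weight_def if_not_P[OF not_top] by (rule tendsto_mult_right_zero[OF power_decay[OF \<open>j < M - 1\<close>]])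
  qed
qed

definition chain_error :: "'c \<times> nat \<Rightarrow> real \<Rightarrow> complex^'n" where
  "chain_error p t = complex_of_real (1 / growth t) *s chain_exp p t
     - (if fst p \<in> D \<and> snd p = M then phase (fst p) t *s v (fst p, 1) else 0)"

lemma scaled_chain_exp_eq:
  assumes "0 < t"
  shows "complex_of_real (1 / growth t) *s chain_exp (c, k) t
    = (\<Sum>j<k. (complex_of_real (relative_weight c j t) * phase c t) *s v (c, k - j))"
  unfolding chain_exp_def fst_conv snd_conv vec.scale_sum_right vector_smult_assoc
    scaled_coefficient_eq[OF assms] ..

lemma dominant_top_term_eq:
  assumes "k \<le> m c"
  shows "(if c \<in> D \<and> k = M then phase c t *s v (c, 1) else 0)
    = (\<Sum>j<k. (complex_of_real (limit_weight c j) * phase c t) *s v (c, k - j))"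
proof (cases "c \<in> D")
  case True
  then have "k \<le> M" using assms mem_C1_iff by simp
  have "(\<Sum>j<k. (complex_of_real (limit_weight c j) * phase c t) *s v (c, k - j))
      = (\<Sum>j<k. if j = M - 1 then phase c t *s v (c, k - j) else 0)"
    using True by (intro sum.cong) (auto simp: limit_weight_def)
  also have "\<dots> = (if k = M then phase c t *s v (c, 1) else 0)"
    using \<open>k \<le> M\<close> M1_ge_1 by (auto simp: sum.delta)
  finally show ?thesis using True by simp
qed (simp add: limit_weight_def)

lemma chain_error_tendsto:
  assumes "p \<in> J"
  shows "(chain_error p \<longlongrightarrow> 0) at_top"
proof -
  obtain c k where p: "p = (c, k)" and c: "c \<in> C" and k: "k \<le> m c"
    using assms by (auto simp: jidx_def)
  define w where "w j t = complex_of_real (relative_weight c j t - limit_weight c j) * phase c t" for j t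
  have "((\<lambda>t. w j t *s v (c, k - j)) \<longlongrightarrow> 0) at_top" if "j < k" for j
  proof -
    have "(relative_weight c j \<longlongrightarrow> limit_weight c j) at_top"
      using that k by (intro relative_weight_tendsto[OF c]) simp
    then have "((\<lambda>t. \<bar>relative_weight c j t - limit_weight c j\<bar>) \<longlongrightarrow> 0) at_top"
      by (intro tendsto_rabs_zero LIM_zero)
    then have "(w j \<longlongrightarrow> 0) at_top"
      unfolding w_def by (rule Lim_null_comparison[rotated]) (simp add: norm_mult)
    from bounded_linear.tendsto[OF bounded_linear_vector_smult_left this, of "v (c, k - j)"]
    show ?thesis by simp
  qed
  then have "((\<lambda>t. \<Sum>j<k. w j t *s v (c, k - j)) \<longlongrightarrow> 0) at_top"
    by (intro tendsto_null_sum) simp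
  moreover have "\<forall>\<^sub>F t in at_top. (\<Sum>j<k. w j t *s v (c, k - j)) = chain_error p t"
    using eventually_gt_at_top[of 0]
  proof eventually_elim
    case (elim t)
    show ?case
      unfolding chain_error_def p fst_conv snd_conv scaled_chain_exp_eq[OF elim]
        dominant_top_term_eq[OF k] sum_subtractf[symmetric] w_def
      by (intro sum.cong) (simp_all add: vector_sub_rdistrib left_diff_distrib)
  qed
  ultimately show ?thesis by (rule Lim_transform_eventually)
qed

lemma sum_jidx_dominant:
  assumes "1 \<le> K" "K \<le> M"
  shows "(\<Sum>p\<in>J. if fst p \<in> D \<and> snd p = K then f p else 0) = (\<Sum>c\<in>D. f (c, K))"
proof -
  have "{p \<in> J. fst p \<in> D \<and> snd p = K} = (\<lambda>c. (c, K)) ` D"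
    using assms by (auto simp: jidx_def mem_C1_iff)
  then show ?thesis
    by (simp add: sum.inter_filter[OF finite_jidx, symmetric] sum.reindex inj_on_def)
qed

lemma Q1_jcoord_expansion:
  "Q t u = (\<Sum>p\<in>J. \<alpha> u p *s (if fst p \<in> D \<and> snd p = M then phase (fst p) t *s v (fst p, 1) else 0))"
  using sum_jidx_dominant[OF M1_ge_1 order_refl, of "\<lambda>p. \<alpha> u p *s (phase (fst p) t *s v (fst p, 1))"]
  by (simp add: Q1_def phase_def if_distrib[of "(*s) _"] vector_smult_assoc mult.commute cong: if_cong)

lemma scaled_expmv_minus_Q1: "scaled_expmv t u - Q t u = (\<Sum>p\<in>J. \<alpha> u p *s chain_error p t)"
  unfolding expmv_jcoord_expansion Q1_jcoord_expansion chain_error_def vec.scale_sum_right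
    vector_ssub_ldistrib sum_subtractf
  by (simp add: vector_smult_assoc mult.commute)

lemma scaled_expmv_approx:
  obtains e where "(e \<longlongrightarrow> 0) at_top" "\<And>t. 0 \<le> e t"
    "\<And>t u. norm (scaled_expmv t u - Q t u) \<le> e t * norm u"
proof -
  obtain B where B: "0 \<le> B" "\<And>x p. cmod (\<alpha> x p) \<le> B * norm x" using jcoord_bounded by blast
  define e where "e t = B * (\<Sum>p\<in>J. norm (chain_error p t))" for t
  show ?thesis
  proof
    show "(e \<longlongrightarrow> 0) at_top"
      unfolding e_def by (intro tendsto_mult_right_zero tendsto_null_sum tendsto_norm_zero chain_error_tendsto)
    show "0 \<le> e t" for t
      unfolding e_def using B(1) by (simp add: sum_nonneg)
    fix t u
    have "norm (scaled_expmv t u - Q t u) \<le> (\<Sum>p\<in>J. cmod (\<alpha> u p) * norm (chain_error p t))"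
      unfolding scaled_expmv_minus_Q1 by (rule order_trans[OF norm_sum]) (simp add: norm_vector_smult)
    also have "\<dots> \<le> (\<Sum>p\<in>J. B * norm u * norm (chain_error p t))"
      by (intro sum_mono mult_right_mono B(2)) simp
    finally show "norm (scaled_expmv t u - Q t u) \<le> e t * norm u"
      by (simp add: e_def sum_distrib_left mult_ac)
  qed
qed

lemma Q1_bounded: obtains B where "0 \<le> B" "\<And>t u. norm (Q t u) \<le> B * norm u"
proof -
  obtain B where B: "0 \<le> B" "\<And>x p. cmod (\<alpha> x p) \<le> B * norm x" using jcoord_bounded by blast
  show ?thesis
  proof
    show "0 \<le> B * (\<Sum>c\<in>D. norm (v (c, 1)))" using B(1) by (simp add: sum_nonneg)
    fix t u
    have "norm (Q t u) \<le> (\<Sum>c\<in>D. cmod (\<alpha> u (c, M)) * norm (v (c, 1)))"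
      unfolding Q1_def by (rule order_trans[OF norm_sum]) (simp add: norm_vector_smult norm_mult norm_exp_i_times)
    also have "\<dots> \<le> (\<Sum>c\<in>D. B * norm u * norm (v (c, 1)))"
      by (intro sum_mono mult_right_mono B(2)) simp
    finally show "norm (Q t u) \<le> B * (\<Sum>c\<in>D. norm (v (c, 1))) * norm u"
      by (simp add: sum_distrib_left mult_ac)
  qed
qed

lemma jcoord_Q1: "c \<in> D \<Longrightarrow> \<alpha> (Q t u) (c, 1) = phase c t * \<alpha> u (c, M)"
proof -
  define \<beta> where "\<beta> p = (if fst p \<in> D \<and> snd p = 1 then phase (fst p) t * \<alpha> u (fst p, M) else 0)"
    for p :: "'c \<times> nat"
  have "\<beta> p = 0" if "p \<notin> J" for p
    using that M1_ge_1 mem_C1_iff by (auto simp: \<beta>_def jidx_def)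
  moreover have "Q t u = (\<Sum>p\<in>J. \<beta> p *s v p)"
    using sum_jidx_dominant[OF order_refl M1_ge_1, of "\<lambda>p. (phase (fst p) t * \<alpha> u (fst p, M)) *s v p"]
    by (simp add: \<beta>_def Q1_def phase_def if_distrib[of "\<lambda>x. x *s _"] cong: if_cong)
  ultimately have "\<alpha> (Q t u) = \<beta>" by (rule jcoord_unique)
  then show "c \<in> D \<Longrightarrow> ?thesis" by (simp add: \<beta>_def)
qed

(* The RLGE condition makes the (c,1)-coordinate of Q_1(t) u have constant nonzero modulus. *)
lemma Q1_bounded_below:
  assumes "RLGE C lam m v u"
  obtains \<delta> where "0 < \<delta>" "\<And>t. \<delta> \<le> norm (Q t u)"
proof -
  obtain c where c: "c \<in> D" "\<alpha> u (c, M) \<noteq> 0" using assms unfolding RLGE_def by blast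
  obtain B where B: "0 \<le> B" "\<And>x p. cmod (\<alpha> x p) \<le> B * norm x" using jcoord_bounded by blast
  have bound: "cmod (\<alpha> u (c, M)) \<le> B * norm (Q t u)" for t
    using B(2)[of "Q t u" "(c, 1)"] unfolding jcoord_Q1[OF c(1)] by (simp add: norm_mult)
  then have "0 < B" using bound[of 0] c(2) B(1) by (cases "B = 0") auto
  then show ?thesis
    using that[of "cmod (\<alpha> u (c, M)) / B"] bound c(2) by (simp add: divide_le_eq mult.commute)
qed

end

locale jordan_vec_norm = vec_norm N + jordan_dominant A C lam m v
  for N :: "complex^'n \<Rightarrow> real" and A :: "complex^'n^'n" and C :: "'c set" and lam m v
begin

lemma scaled_expmv_approx_N:
  obtains e where "(e \<longlongrightarrow> 0) at_top" "\<And>t. 0 \<le> e t"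
    "\<And>t u. \<bar>N (scaled_expmv t u) - N (Q t u)\<bar> \<le> e t * N u"
proof -
  obtain e where e: "(e \<longlongrightarrow> 0) at_top" "\<And>t. 0 \<le> e t"
    "\<And>t u. norm (scaled_expmv t u - Q t u) \<le> e t * norm u"
    using scaled_expmv_approx by blast
  obtain K where K: "0 \<le> K" "\<And>x. N x \<le> K * norm x" using N_le_norm by blast
  obtain c where c: "0 < c" "\<And>x. norm x \<le> c * N x" using norm_le_N by blast
  show ?thesis
  proof
    show "((\<lambda>t. K * c * e t) \<longlongrightarrow> 0) at_top" by (rule tendsto_mult_right_zero[OF e(1)])
    show "0 \<le> K * c * e t" for t using K(1) c(1) e(2) by simp
    fix t u
    have "\<bar>N (scaled_expmv t u) - N (Q t u)\<bar> \<le> K * norm (scaled_expmv t u - Q t u)"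
      using N_abs_diff_le K(2) by (rule order_trans)
    also have "\<dots> \<le> K * (e t * (c * N u))"
      using K(1) e(2) by (intro mult_left_mono order_trans[OF e(3)] c(2)) auto
    finally show "\<bar>N (scaled_expmv t u) - N (Q t u)\<bar> \<le> K * c * e t * N u"
      by (simp add: mult_ac)
  qed
qed

lemma Q1_bounded_N: obtains B where "0 \<le> B" "\<And>t u. N (Q t u) \<le> B * N u"
proof -
  obtain B where B: "0 \<le> B" "\<And>t u. norm (Q t u) \<le> B * norm u" using Q1_bounded by blast
  obtain K where K: "0 \<le> K" "\<And>x. N x \<le> K * norm x" using N_le_norm by blast
  obtain c where c: "0 < c" "\<And>x. norm x \<le> c * N x" using norm_le_N by blast
  have "N (Q t u) \<le> K * (B * (c * N u))" for t u
  proof -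
    have "N (Q t u) \<le> K * norm (Q t u)" by (rule K(2))
    also have "\<dots> \<le> K * (B * norm u)" by (intro mult_left_mono B(2) K(1))
    also have "\<dots> \<le> K * (B * (c * N u))" by (intro mult_left_mono c(2) K(1) B(1))
    finally show ?thesis .
  qed
  then show ?thesis using that[of "K * B * c"] K(1) B(1) c(1) by (simp add: mult_ac)
qed

lemma Q1_bounded_below_N:
  assumes "RLGE C lam m v u"
  obtains d where "0 < d" "\<And>t. d \<le> N (Q t u)"
proof -
  obtain \<delta> where \<delta>: "0 < \<delta>" "\<And>t. \<delta> \<le> norm (Q t u)" using Q1_bounded_below[OF assms] by blast
  obtain c where c: "0 < c" "\<And>x. norm x \<le> c * N x" using norm_le_N by blast
  have "\<delta> / c \<le> N (Q t u)" for t
    using order_trans[OF \<delta>(2) c(2)] c(1) by (simp add: divide_le_eq mult.commute)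
  then show ?thesis using that[of "\<delta> / c"] \<delta>(1) c(1) by simp
qed

lemma bdd_above_Q1:
  assumes "\<And>z. z \<in> S \<Longrightarrow> N z \<le> R"
  shows "bdd_above ((\<lambda>z. N (Q t z)) ` S)"
proof -
  obtain B where B: "0 \<le> B" "\<And>t u. N (Q t u) \<le> B * N u" using Q1_bounded_N by blast
  have "N (Q t z) \<le> B * R" if "z \<in> S" for z
    using B(2) mult_left_mono[OF assms[OF that] B(1)] by (rule order_trans)
  then show ?thesis by (rule bdd_aboveI2)
qed

lemma bdd_above_scaled_expmv:
  assumes "\<And>z. z \<in> S \<Longrightarrow> N z \<le> R"
  shows "bdd_above ((\<lambda>z. N (scaled_expmv t z)) ` S)"
proof -
  obtain e where e: "(e \<longlongrightarrow> 0) at_top" "\<And>t. 0 \<le> e t"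
    "\<And>t u. \<bar>N (scaled_expmv t u) - N (Q t u)\<bar> \<le> e t * N u"
    using scaled_expmv_approx_N by blast
  have close: "\<bar>N (scaled_expmv t z) - N (Q t z)\<bar> \<le> e t * R" if "z \<in> S" for z
    using e(3) mult_left_mono[OF assms[OF that] e(2)] by (rule order_trans)
  show ?thesis by (rule bdd_above_image_if_close[OF bdd_above_Q1[OF assms, where t = t] close])
qed

lemma SUP_scaled_expmv_ratio_tendsto:
  assumes bounded: "\<And>z. z \<in> S \<Longrightarrow> N z \<le> R" and "u \<in> S" "RLGE C lam m v u"
  shows "((\<lambda>t. (SUP z\<in>S. N (scaled_expmv t z)) / (SUP z\<in>S. N (Q t z))) \<longlongrightarrow> 1) at_top"
proof -
  obtain e where e: "(e \<longlongrightarrow> 0) at_top" "\<And>t. 0 \<le> e t"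
    "\<And>t u. \<bar>N (scaled_expmv t u) - N (Q t u)\<bar> \<le> e t * N u"
    using scaled_expmv_approx_N by blast
  obtain d where d: "0 < d" "\<And>t. d \<le> N (Q t u)" using Q1_bounded_below_N[OF assms(3)] by blast
  have "\<bar>N (scaled_expmv t z) - N (Q t z)\<bar> \<le> e t * R" if "z \<in> S" for t z
    using e(3) mult_left_mono[OF bounded[OF that] e(2)] by (rule order_trans)
  then show ?thesis
    using tendsto_mult_left_zero[OF e(1)] bdd_above_Q1[OF bounded] assms(2) d
    by (rule SUP_ratio_tendsto_1)
qed

lemma scaled_expmv_ratio_tendsto:
  "RLGE C lam m v u \<Longrightarrow> ((\<lambda>t. N (scaled_expmv t u) / N (Q t u)) \<longlongrightarrow> 1) at_top"
  using SUP_scaled_expmv_ratio_tendsto[of "{u}" "N u" u] by simp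

lemma N_Q1_pos:
  assumes "RLGE C lam m v u"
  shows "0 < N (Q t u)"
proof -
  obtain d where "0 < d" "\<And>t. d \<le> N (Q t u)" using Q1_bounded_below_N[OF assms] by blast
  then show ?thesis by (rule less_le_trans)
qed

lemma eventually_N_Q1_nonzero: "RLGE C lam m v u \<Longrightarrow> \<forall>\<^sub>F t in F. N (Q t u) \<noteq> 0"
  by (intro always_eventually allI) (metis N_Q1_pos less_irrefl)

lemma N_expmv_eq: "0 < t \<Longrightarrow> N (expmv t A u) = growth t * N (scaled_expmv t u)"
  using growth_pos[of t] by (simp add: N_smult vector_smult_assoc norm_divide)

lemma Kdir_eq:
  "0 < t \<Longrightarrow> Kdir N A t y z = N (scaled_expmv t z) / N (scaled_expmv t (normalize_vec N y))"
  using growth_pos[of t] by (simp add: Kdir_def N_expmv_eq)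

lemma RLGE_normalize_vec: "y \<noteq> 0 \<Longrightarrow> RLGE C lam m v y \<Longrightarrow> RLGE C lam m v (normalize_vec N y)"
  unfolding normalize_vec_def by (rule RLGE_smult) (simp_all add: N_eq_0_iff)

lemma Kdir_asymptotic:
  assumes "RLGE C lam m v (normalize_vec N y0)" "RLGE C lam m v z0"
  shows "((\<lambda>t. Kdir N A t y0 z0 / (N (Q t z0) / N (Q t (normalize_vec N y0)))) \<longlongrightarrow> 1) at_top"
proof -
  let ?y = "normalize_vec N y0"
  have "((\<lambda>t. (N (scaled_expmv t z0) / N (scaled_expmv t ?y)) / (N (Q t z0) / N (Q t ?y))) \<longlongrightarrow> 1) at_top"
    using scaled_expmv_ratio_tendsto[OF assms(2)] scaled_expmv_ratio_tendsto[OF assms(1)]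
      eventually_N_Q1_nonzero[OF assms(2)] eventually_N_Q1_nonzero[OF assms(1)]
    by (rule tendsto_divide_ratios_1)
  moreover have "\<forall>\<^sub>F t in at_top. (N (scaled_expmv t z0) / N (scaled_expmv t ?y)) / (N (Q t z0) / N (Q t ?y))
      = Kdir N A t y0 z0 / (N (Q t z0) / N (Q t ?y))"
    using eventually_gt_at_top[of 0] by eventually_elim (simp add: Kdir_eq)
  ultimately show ?thesis by (rule Lim_transform_eventually)
qed

lemma Kcond_asymptotic:
  assumes "RLGE C lam m v (normalize_vec N y0)" "RLGE C lam m v z0" "N z0 = 1"
  shows "((\<lambda>t. Kcond N A t y0 / (induced_norm N (Q t) / N (Q t (normalize_vec N y0)))) \<longlongrightarrow> 1) at_top"
proof -
  let ?y = "normalize_vec N y0" and ?S = "{z. N z = 1}"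
  have bounded: "\<And>z. z \<in> ?S \<Longrightarrow> N z \<le> 1" by simp
  have z0: "z0 \<in> ?S" using assms(3) by simp
  have "0 < induced_norm N (Q t)" for t
    unfolding induced_norm_def
    using less_le_trans[OF N_Q1_pos[OF assms(2)] cSUP_upper[OF z0 bdd_above_Q1[OF bounded]]] .
  then have "\<forall>\<^sub>F t in at_top. induced_norm N (Q t) \<noteq> 0"
    by (intro always_eventually allI) (metis less_irrefl)
  moreover have "((\<lambda>t. (SUP z\<in>?S. N (scaled_expmv t z)) / (SUP z\<in>?S. N (Q t z))) \<longlongrightarrow> 1) at_top"
    using bounded z0 assms(2) by (rule SUP_scaled_expmv_ratio_tendsto)
  ultimately have "((\<lambda>t. ((SUP z\<in>?S. N (scaled_expmv t z)) / N (scaled_expmv t ?y))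
      / (induced_norm N (Q t) / N (Q t ?y))) \<longlongrightarrow> 1) at_top"
    using scaled_expmv_ratio_tendsto[OF assms(1)] eventually_N_Q1_nonzero[OF assms(1)]
    unfolding induced_norm_def by (intro tendsto_divide_ratios_1)
  moreover have "\<forall>\<^sub>F t in at_top. ((SUP z\<in>?S. N (scaled_expmv t z)) / N (scaled_expmv t ?y))
      / (induced_norm N (Q t) / N (Q t ?y)) = Kcond N A t y0 / (induced_norm N (Q t) / N (Q t ?y))"
    using eventually_gt_at_top[of 0]
  proof eventually_elim
    case (elim t)
    have "?S \<noteq> {}" using z0 by blast
    moreover have "bdd_above ((\<lambda>z. N (scaled_expmv t z)) ` ?S)"
      using bounded by (rule bdd_above_scaled_expmv)
    ultimately have "Kcond N A t y0 = (SUP z\<in>?S. N (scaled_expmv t z)) / N (scaled_expmv t ?y)"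
      unfolding Kcond_def Kdir_eq[OF elim] using N_nonneg by (rule cSUP_divide_const)
    then show ?case by simp
  qed
  ultimately show ?thesis by (rule Lim_transform_eventually)
qed

end

theorem theorem5:
  fixes A :: "complex ^ 'n ^ 'n"
    and N :: "complex ^ 'n \<Rightarrow> real"
    and y0 z0 :: "complex ^ 'n"
    and C :: "'c set" and lam :: "'c \<Rightarrow> complex" and m :: "'c \<Rightarrow> nat"
    and v :: "'c \<times> nat \<Rightarrow> complex ^ 'n"
  assumes "is_vec_norm N"
    and "is_jordan_basis A C lam m v"
    and "y0 \<noteq> 0"
    and "N z0 = 1"
    and "RLGE C lam m v y0"
    and "RLGE C lam m v z0"
  shows "((\<lambda>t. Kdir N A t y0 z0 /
              (N (Q1 C lam m v t z0) / N (Q1 C lam m v t (normalize_vec N y0)))) \<longlongrightarrow> 1) at_top \<and>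
         ((\<lambda>t. Kcond N A t y0 /
              (induced_norm N (Q1 C lam m v t) / N (Q1 C lam m v t (normalize_vec N y0)))) \<longlongrightarrow> 1) at_top"
proof -
  have "C1 C lam m \<noteq> {}" using assms(6) unfolding RLGE_def by blast
  with assms(1,2) interpret jordan_vec_norm N A C lam m v
    by unfold_locales (simp_all add: vec_norm_def)
  have "RLGE C lam m v (normalize_vec N y0)" using assms(3,5) by (rule RLGE_normalize_vec)
  then show ?thesis using Kdir_asymptotic Kcond_asymptotic assms(4,6) by blast
qed

end
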